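(* For every $r\ge0$, every graph $G\in\mathcal{G}_{\Sigma,\Delta,\pi}$ and every $v\in V(G)$, we have $\omega_r(G^r_v)=\omega(G)^r_v$.
   Context: Fix an uncountably infinite set $\mathcal{V}$, sets $\Sigma,\Delta$, finite $\pi$. A graph $G$: countable $V(G)\subset\mathcal{V}$; a set $E(G)$ of pairwise disjoint two-element subsets of $V(G)\times\pi$ (write $u\!:\!i$ for $(u,i)$); partial labelings $\sigma(G):V(G)\rightharpoonup\Sigma$, $\delta(G):E(G)\rightharpoonup\Delta$; $\mathcal{G}_{\Sigma,\Delta,\pi}$ the set of graphs. $d_G$ shortest-path distance, $B_G(c,r)$ ball. Disk $G^r_c=(H,c)$: $V(H)=B_G(c,r+1)$, $E(H)$ the edges of $G$ with an endpoint in $B_G(c,r)$, $\sigma(H)=\sigma(G)|_{B_G(c,r)}$, $\delta(H)=\delta(G)|_{E(H)}$; $\mathcal{D}^r_{\Sigma,\Delta,\pi}$ the set of radius-$r$ disks. Let $\Sigma'=\Sigma\uplus\{\star\}$, $\Delta'=\Delta\uplus\{\star\}$, $\pi'=\pi\times\{0,1\}$. The encoding $\omega:\mathcal{G}_{\Sigma,\Delta,\pi}\to\mathcal{G}_{\Sigma',\Delta',\pi'}$: $V(\omega(G))=V(G)$; $\sigma(\omega(G))(u)=\sigma(G)(u)$ if defined, else $\star$; $E(\omega(G))=\{\{u\!:\!(i,0),\mathrm{trg}^\star_G(u\!:\!i)\}\mid u\in V(G),i\in\pi\}$ where $\mathrm{trg}^\star_G(u\!:\!i)=v\!:\!(j,0)$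 if $\{u\!:\!i,v\!:\!j\}\in E(G)$ and $\mathrm{trg}^\star_G(u\!:\!i)=u\!:\!(i,1)$ if $u\!:\!i$ lies in no edge of $G$ (a loopback edge); $\delta(\omega(G))(\{u\!:\!(i,0),v\!:\!(j,0)\})=\delta(G)(\{u\!:\!i,v\!:\!j\})$ if defined and $\star$ otherwise, and $\delta(\omega(G))(\{u\!:\!(i,0),u\!:\!(i,1)\})=\star$. For a radius-$r$ disk $(H,v)\in\mathcal{D}^r_{\Sigma,\Delta,\pi}$, $\omega_r((H,v)):=\omega(H)^r_v$. *)

theory Defs
  imports Main "HOL-Library.Countable_Set" "HOL-Library.Extended_Nat"
begin

text \<open>Graphs over vertex type 'v (the universe of vertex names), state labels 's,
  edge labels 'd and port set 'p. A vertex-port pair u:i is (u,i).\<close>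

record ('v,'s,'d,'p) graph =
  verts :: "'v set"
  edges :: "('v \<times> 'p) set set"
  vlab  :: "'v \<Rightarrow> 's option"
  elab  :: "('v \<times> 'p) set \<Rightarrow> 'd option"

definition is_graph :: "('v,'s,'d,'p) graph \<Rightarrow> bool" where
  "is_graph G \<longleftrightarrow>
     countable (verts G) \<and>
     (\<forall>e\<in>edges G. card e = 2 \<and> e \<subseteq> verts G \<times> UNIV) \<and>
     (\<forall>e\<in>edges G. \<forall>e'\<in>edges G. e \<noteq> e' \<longrightarrow> e \<inter> e' = {}) \<and>
     dom (vlab G) \<subseteq> verts G \<and>
     dom (elab G) \<subseteq> edges G"

definition adj :: "('v,'s,'d,'p) graph \<Rightarrow> ('v \<times> 'v) set" where
  "adj G = {(u,v). \<exists>i j. {(u,i),(v,j)} \<in> edges G}"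

definition gdist :: "('v,'s,'d,'p) graph \<Rightarrow> 'v \<Rightarrow> 'v \<Rightarrow> enat" where
  "gdist G u v = (INF n\<in>{n. (u,v) \<in> adj G ^^ n}. enat n)"

definition ball :: "('v,'s,'d,'p) graph \<Rightarrow> 'v \<Rightarrow> nat \<Rightarrow> 'v set" where
  "ball G c r = {u \<in> verts G. gdist G c u \<le> enat r}"

definition disk :: "('v,'s,'d,'p) graph \<Rightarrow> 'v \<Rightarrow> nat \<Rightarrow> ('v,'s,'d,'p) graph \<times> 'v" where
  "disk G c r =
    (let B = ball G c r;
         EH = {e \<in> edges G. \<exists>x\<in>e. fst x \<in> B}
     in (\<lparr> verts = ball G c (Suc r),
           edges = EH,
           vlab = restrict_map (vlab G) B,
           elab = restrict_map (elab G) EH \<rparr>, c))"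

text \<open>Sigma' = Sigma + {star}, Delta' = Delta + {star}.\<close>
datatype 'a starred = Lab 'a | Star

text \<open>trg*: the partner of u:i in G, encoded with port (j,0), or the loopback port (i,1).
  In pi' = pi x {0,1}, 0 is False and 1 is True.\<close>
definition trg :: "('v,'s,'d,'p) graph \<Rightarrow> 'v \<times> 'p \<Rightarrow> 'v \<times> ('p \<times> bool)" where
  "trg G x =
    (if \<exists>y. y \<noteq> x \<and> {x, y} \<in> edges G
     then (case (THE y. y \<noteq> x \<and> {x, y} \<in> edges G) of (v, j) \<Rightarrow> (v, (j, False)))
     else (fst x, (snd x, True)))"

definition strip :: "'v \<times> ('p \<times> bool) \<Rightarrow> 'v \<times> 'p" where
  "strip x = (fst x, fst (snd x))"

definition enc_edges :: "('v,'s,'d,'p) graph \<Rightarrow> ('v \<times> ('p \<times> bool)) set set" where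
  "enc_edges G = {{(u, (i, False)), trg G (u, i)} | u i. u \<in> verts G}"

definition omega :: "('v,'s,'d,'p) graph \<Rightarrow> ('v,'s starred,'d starred,'p \<times> bool) graph" where
  "omega G =
    \<lparr> verts = verts G,
      edges = enc_edges G,
      vlab = (\<lambda>u. if u \<in> verts G then
                     Some (case vlab G u of Some s \<Rightarrow> Lab s | None \<Rightarrow> Star)
                   else None),
      elab = (\<lambda>e. if e \<in> enc_edges G then
                     Some (if (\<forall>x\<in>e. snd (snd x) = False)
                           then (case elab G (strip ` e) of Some d \<Rightarrow> Lab d | None \<Rightarrow> Star)
                           else Star)
                   else None) \<rparr>"

definition omega_r :: "nat \<Rightarrow> ('v,'s,'d,'p) graph \<times> 'v \<Rightarrow> ('v,'s starred,'d starred,'p \<times> bool) graph \<times> 'v" where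
  "omega_r r D = disk (omega (fst D)) (snd D) r"

end

theory Submission
  imports Defs
begin

(* Both disks are read off from the same data: the balls of radius r and r + 1 around v,
   the edges meeting the inner ball, and the labels on these. The encoding omega changes
   adjacency only by loopbacks, so it preserves balls, and the disk G^r_v has the same balls
   as G up to radius r + 1. The encoded edge at a port u:i depends only on the edges of the
   original graph through u:i, and every encoded edge meeting a vertex set A is the encoded
   edge at a port of some vertex of A. Hence omega maps graphs that agree near A to graphs
   that agree near A; apply this to G^r_v and G with A = B_G(v, r). *)

fun reach_within :: "('a \<times> 'a) set \<Rightarrow> 'a \<Rightarrow> nat \<Rightarrow> 'a set" where
  "reach_within R c 0 = {c}"
| "reach_within R c (Suc k) = reach_within R c k \<union> R `` reach_within R c k"

lemma reach_within_mono: "k \<le> m \<Longrightarrow> reach_within R c k \<subseteq> reach_within R c m"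
  by (induction m) (auto simp: le_Suc_eq)

lemma reach_within_reflcl: "reach_within (R \<union> Id) c k = reach_within R c k"
  by (induction k) auto

lemma reach_within_cong:
  assumes "\<And>k' x. k' < k \<Longrightarrow> x \<in> reach_within R c k' \<Longrightarrow> R `` {x} = S `` {x}"
  shows "reach_within R c k = reach_within S c k"
  using assms
proof (induction k)
  case (Suc k)
  have "reach_within R c k = reach_within S c k"
    by (rule Suc.IH, rule Suc.prems) auto
  moreover have "R `` reach_within R c k = S `` reach_within R c k"
    using Suc.prems by (subst (1 2) Image_eq_UN) auto
  ultimately show ?case by simp
qed simp

lemma reach_within_iff_relpow: "u \<in> reach_within R c k \<longleftrightarrow> (\<exists>n\<le>k. (c, u) \<in> R ^^ n)"
proof (induction k arbitrary: u)
  case (Suc k)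
  have "(\<exists>n\<le>Suc k. (c, u) \<in> R ^^ n) \<longleftrightarrow>
        (\<exists>n\<le>k. (c, u) \<in> R ^^ n) \<or> (\<exists>n\<le>k. (c, u) \<in> R ^^ Suc n)"
    by (metis le_Suc_eq Suc_le_mono not0_implies_Suc)
  with Suc.IH show ?case by simp blast
qed auto

lemma gdist_le_enat_iff: "gdist G c u \<le> enat k \<longleftrightarrow> u \<in> reach_within (adj G) c k"
proof
  assume "gdist G c u \<le> enat k"
  then have "gdist G c u < enat (Suc k)"
    by (simp add: order_le_less_trans)
  then obtain n where "(c, u) \<in> adj G ^^ n" "n < Suc k"
    unfolding gdist_def by (auto simp: INF_less_iff)
  then show "u \<in> reach_within (adj G) c k"
    unfolding reach_within_iff_relpow less_Suc_eq_le by blast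
next
  assume "u \<in> reach_within (adj G) c k"
  then show "gdist G c u \<le> enat k"
    unfolding gdist_def reach_within_iff_relpow
    by (meson INF_lower2 enat_ord_simps(1) mem_Collect_eq)
qed

definition incident_edges :: "('v,'s,'d,'p) graph \<Rightarrow> 'v set \<Rightarrow> ('v \<times> 'p) set set" where
  "incident_edges G A = {e \<in> edges G. \<exists>x\<in>e. fst x \<in> A}"

lemma disk_eq:
  "disk G c r =
    (\<lparr>verts = ball G c (Suc r), edges = incident_edges G (ball G c r),
      vlab = vlab G |` ball G c r, elab = elab G |` incident_edges G (ball G c r)\<rparr>, c)"
  by (simp add: disk_def incident_edges_def Let_def)

lemma ball_eq_reach_within: "ball G c k = verts G \<inter> reach_within (adj G) c k"
  by (auto simp: ball_def gdist_le_enat_iff)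

lemma ball_mono: "k \<le> m \<Longrightarrow> ball G c k \<subseteq> ball G c m"
  unfolding ball_eq_reach_within by (metis inf_mono order_refl reach_within_mono)

lemma adj_sym:
  assumes "(a, b) \<in> adj G"
  shows "(b, a) \<in> adj G"
proof -
  obtain i j where "{(a, i), (b, j)} \<in> edges G" using assms unfolding adj_def by blast
  then have "{(b, j), (a, i)} \<in> edges G" by (simp add: insert_commute)
  then show ?thesis unfolding adj_def by blast
qed

lemma is_graph_edgeD:
  assumes "is_graph G" and "{x, y} \<in> edges G"
  shows "x \<noteq> y" and "fst x \<in> verts G" and "fst y \<in> verts G"
proof -
  have "\<forall>e\<in>edges G. card e = 2 \<and> e \<subseteq> verts G \<times> UNIV"
    using assms(1) unfolding is_graph_def by (elim conjE)
  then have "card {x, y} = 2" and sub: "{x, y} \<subseteq> verts G \<times> UNIV"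
    using assms(2) by blast+
  then show "x \<noteq> y" by (cases "x = y") simp_all
  show "fst x \<in> verts G" "fst y \<in> verts G"
    using sub by (auto simp: mem_Times_iff)
qed

lemma is_graph_edges_disjoint:
  assumes "is_graph G" and "e \<in> edges G" and "e' \<in> edges G" and "e \<inter> e' \<noteq> {}"
  shows "e = e'"
proof -
  have "\<forall>e\<in>edges G. \<forall>e'\<in>edges G. e \<noteq> e' \<longrightarrow> e \<inter> e' = {}"
    using assms(1) unfolding is_graph_def by (elim conjE)
  then show ?thesis using assms(2-4) by blast
qed

lemma adj_in_verts: "is_graph G \<Longrightarrow> (a, b) \<in> adj G \<Longrightarrow> a \<in> verts G \<and> b \<in> verts G"
  unfolding adj_def using is_graph_edgeD by fastforce

lemma adj_of_edge:
  assumes "is_graph G" and "e \<in> edges G" and "x \<in> e" and "z \<in> e" and "x \<noteq> z"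
  shows "(fst x, fst z) \<in> adj G"
proof -
  have "card e = 2" using assms(1,2) unfolding is_graph_def by simp
  then have "e = {x, z}" using assms(3-5) by (auto simp: card_2_iff)
  then show ?thesis using assms(2) unfolding adj_def by (cases x, cases z) auto
qed

lemma reach_within_subset_verts:
  "is_graph G \<Longrightarrow> c \<in> verts G \<Longrightarrow> reach_within (adj G) c k \<subseteq> verts G"
  by (induction k) (auto dest: adj_in_verts)

lemma incident_edge_in_ball_Suc:
  assumes "is_graph G" and "e \<in> incident_edges G (ball G c r)" and "z \<in> e"
  shows "fst z \<in> ball G c (Suc r)"
proof -
  obtain x where e: "e \<in> edges G" "x \<in> e" "fst x \<in> ball G c r"
    using assms(2) unfolding incident_edges_def by blast
  show ?thesis
  proof (cases "x = z")
    case True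
    then show ?thesis using e(3) ball_mono[of r "Suc r" G c] by auto
  next
    case False
    then have "(fst x, fst z) \<in> adj G" using adj_of_edge[OF assms(1) e(1,2) assms(3)] by simp
    then show ?thesis using e(3) adj_in_verts[OF assms(1)] by (auto simp: ball_eq_reach_within)
  qed
qed

lemma is_graph_disk:
  assumes G: "is_graph G"
  shows "is_graph (fst (disk G c r))"
proof -
  have "countable (ball G c (Suc r))"
    using G unfolding is_graph_def ball_def by (auto intro: countable_subset)
  moreover have "e \<subseteq> ball G c (Suc r) \<times> UNIV" if "e \<in> incident_edges G (ball G c r)" for e
    using incident_edge_in_ball_Suc[OF G that] by (auto simp: mem_Times_iff)
  moreover have "dom (vlab G |` ball G c r) \<subseteq> ball G c (Suc r)"
    using ball_mono[of r "Suc r" G c] by auto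
  ultimately show ?thesis
    using G unfolding is_graph_def disk_eq incident_edges_def by auto
qed

lemma adj_disk_Image:
  assumes "x \<in> ball G c r"
  shows "adj (fst (disk G c r)) `` {x} = adj G `` {x}"
  using assms by (auto simp: adj_def disk_eq incident_edges_def)

lemma ball_disk:
  assumes G: "is_graph G" and c: "c \<in> verts G" and k: "k \<le> Suc r"
  shows "ball (fst (disk G c r)) c k = ball G c k"
proof -
  have "reach_within (adj G) c k = reach_within (adj (fst (disk G c r))) c k"
  proof (rule reach_within_cong)
    fix k' x assume "k' < k" and "x \<in> reach_within (adj G) c k'"
    then have "x \<in> reach_within (adj G) c r"
      using k reach_within_mono[of k' r "adj G" c] by auto
    then have "x \<in> ball G c r"
      using reach_within_subset_verts[OF G c] by (auto simp: ball_eq_reach_within)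
    then show "adj G `` {x} = adj (fst (disk G c r)) `` {x}"
      by (simp add: adj_disk_Image)
  qed
  then show ?thesis
    using k reach_within_mono[of k "Suc r" "adj G" c] by (auto simp: ball_eq_reach_within disk_eq)
qed

lemma trg_cong:
  assumes "\<And>y. {x, y} \<in> edges X \<longleftrightarrow> {x, y} \<in> edges Y"
  shows "trg X x = trg Y x"
  unfolding trg_def assms ..

lemma trg_partner:
  assumes G: "is_graph G" and e: "{x, y} \<in> edges G"
  shows "trg G x = (fst y, (snd y, False))"
proof -
  have "y' \<noteq> x \<and> {x, y'} \<in> edges G \<longleftrightarrow> y' = y" for y'
  proof
    assume y': "y' \<noteq> x \<and> {x, y'} \<in> edges G"
    have "{x, y'} = {x, y}"
      using is_graph_edges_disjoint[OF G conjunct2[OF y'] e] by blast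
    then show "y' = y" using y' by (auto simp: doubleton_eq_iff)
  qed (use is_graph_edgeD(1)[OF G e] e in auto)
  then have "\<exists>y'. y' \<noteq> x \<and> {x, y'} \<in> edges G"
    and "(THE y'. y' \<noteq> x \<and> {x, y'} \<in> edges G) = y"
    by simp_all
  then show ?thesis unfolding trg_def by (simp add: case_prod_beta)
qed

lemma trg_cases [consumes 1]:
  assumes "is_graph G"
  obtains (partner) y where "{x, y} \<in> edges G" and "trg G x = (fst y, (snd y, False))"
    | (loop) "\<And>y. {x, y} \<notin> edges G" and "trg G x = (fst x, (snd x, True))"
proof (cases "\<exists>y. {x, y} \<in> edges G")
  case True
  then show ?thesis using partner trg_partner[OF assms] by blast
next
  case False
  then show ?thesis using loop unfolding trg_def by auto
qed

lemma verts_omega [simp]: "verts (omega G) = verts G"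
  by (simp add: omega_def)

lemma edges_omega [simp]: "edges (omega G) = enc_edges G"
  by (simp add: omega_def)

lemma adj_omega_reflcl:
  assumes G: "is_graph G"
  shows "adj (omega G) \<union> Id = adj G \<union> Id"
proof (intro equalityI subsetI)
  fix p assume "p \<in> adj (omega G) \<union> Id"
  then consider "p \<in> Id" | a b i' j' u i where "p = (a, b)"
      "{(a, i'), (b, j')} = {(u, (i, False)), trg G (u, i)}"
    by (auto simp: adj_def enc_edges_def)
  then show "p \<in> adj G \<union> Id"
  proof cases
    case 2
    from G show ?thesis
    proof (cases rule: trg_cases[where x = "(u, i)"])
      case (partner y)
      then have "(u, fst y) \<in> adj G" unfolding adj_def by (cases y) auto
      then show ?thesis using 2 partner(2) adj_sym by (auto simp: doubleton_eq_iff)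
    next
      case loop
      then show ?thesis using 2 by (auto simp: doubleton_eq_iff)
    qed
  qed simp
next
  fix p assume "p \<in> adj G \<union> Id"
  then consider "p \<in> Id" | a b i j where "p = (a, b)" "{(a, i), (b, j)} \<in> edges G"
    unfolding adj_def by auto
  then show "p \<in> adj (omega G) \<union> Id"
  proof cases
    case 2
    then have "{(a, (i, False)), trg G (a, i)} \<in> enc_edges G"
      using is_graph_edgeD(2)[OF G] unfolding enc_edges_def by fastforce
    then show ?thesis
      using 2 trg_partner[OF G 2(2)] unfolding adj_def by auto
  qed simp
qed

lemma ball_omega: "is_graph G \<Longrightarrow> ball (omega G) c k = ball G c k"
  by (metis adj_omega_reflcl ball_eq_reach_within reach_within_reflcl verts_omega)

lemma incident_edges_omega:
  assumes G: "is_graph G"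
  shows "incident_edges (omega G) A = {{(u, (i, False)), trg G (u, i)} | u i. u \<in> A \<inter> verts G}"
proof (intro equalityI subsetI)
  fix e assume "e \<in> incident_edges (omega G) A"
  then have "e \<in> enc_edges G" and "\<exists>x\<in>e. fst x \<in> A"
    by (simp_all add: incident_edges_def)
  then obtain u i x where e: "e = {(u, (i, False)), trg G (u, i)}" and u: "u \<in> verts G"
    and x: "x \<in> e" "fst x \<in> A"
    unfolding enc_edges_def by blast
  show "e \<in> {{(u, (i, False)), trg G (u, i)} | u i. u \<in> A \<inter> verts G}"
  proof (cases "fst x = u")
    case True
    then show ?thesis using e u x(2) by blast
  next
    case False
    then have x_trg: "x = trg G (u, i)" using e x(1) by auto
    from G show ?thesis
    proof (cases rule: trg_cases[where x = "(u, i)"])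
      case (partner y)
      \<comment> \<open>the same edge, seen from the port at the other end\<close>
      have "{y, (u, i)} \<in> edges G" using partner(1) by (simp add: insert_commute)
      then have "trg G y = (u, (i, False))" and "fst y \<in> verts G"
        using trg_partner[OF G] is_graph_edgeD(2)[OF G] by auto
      then have "e = {(fst y, (snd y, False)), trg G (fst y, snd y)}"
        using e partner(2) by auto
      moreover have "fst y \<in> A" using x(2) x_trg partner(2) by simp
      ultimately show ?thesis using \<open>fst y \<in> verts G\<close> by blast
    next
      case loop
      then show ?thesis using False x_trg by simp
    qed
  qed
qed (auto simp: incident_edges_def enc_edges_def)

definition agree_near :: "('v,'s,'d,'p) graph \<Rightarrow> ('v,'s,'d,'p) graph \<Rightarrow> 'v set \<Rightarrow> bool" where
  "agree_near G H A \<longleftrightarrow>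
     incident_edges G A = incident_edges H A \<and>
     (\<forall>u\<in>A. vlab G u = vlab H u) \<and>
     (\<forall>e\<in>incident_edges G A. elab G e = elab H e)"

lemma trg_agree_near:
  assumes "agree_near G H A" and "u \<in> A"
  shows "trg G (u, i) = trg H (u, i)"
proof (rule trg_cong)
  fix y
  have "{(u, i), y} \<in> edges G \<longleftrightarrow> {(u, i), y} \<in> incident_edges G A"
    "{(u, i), y} \<in> edges H \<longleftrightarrow> {(u, i), y} \<in> incident_edges H A"
    using assms(2) by (auto simp: incident_edges_def)
  then show "{(u, i), y} \<in> edges G \<longleftrightarrow> {(u, i), y} \<in> edges H"
    using assms(1) by (simp add: agree_near_def)
qed

lemma agree_near_omega:
  assumes G: "is_graph G" and H: "is_graph H"
    and A: "A \<subseteq> verts G" "A \<subseteq> verts H" and agree: "agree_near G H A"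
  shows "agree_near (omega G) (omega H) A"
proof -
  have trg: "trg G (u, i) = trg H (u, i)" if "u \<in> A" for u i
    using trg_agree_near[OF agree that] .
  have edges: "incident_edges (omega G) A = incident_edges (omega H) A"
    unfolding incident_edges_omega[OF G] incident_edges_omega[OF H]
    using A trg by (intro Collect_cong) (metis Int_absorb2)
  have "vlab (omega G) u = vlab (omega H) u" if "u \<in> A" for u
    using that A agree by (auto simp: omega_def agree_near_def)
  moreover have "elab (omega G) e = elab (omega H) e" if e: "e \<in> incident_edges (omega G) A" for e
  proof -
    have "e \<in> enc_edges G" "e \<in> enc_edges H"
      using e edges by (auto simp: incident_edges_def)
    moreover have "elab G (strip ` e) = elab H (strip ` e)" if not_loop: "\<forall>x\<in>e. \<not> snd (snd x)"
    proof -
      obtain u i where e_eq: "e = {(u, (i, False)), trg G (u, i)}" and u: "u \<in> A"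
        using e unfolding incident_edges_omega[OF G] by blast
      from G show ?thesis
      proof (cases rule: trg_cases[where x = "(u, i)"])
        case (partner y)
        then have "strip ` e = {(u, i), y}" by (simp add: e_eq strip_def)
        moreover have "{(u, i), y} \<in> incident_edges G A"
          using partner(1) u by (auto simp: incident_edges_def)
        ultimately show ?thesis using agree by (simp add: agree_near_def)
      next
        case loop
        then show ?thesis using not_loop e_eq by simp
      qed
    qed
    ultimately show ?thesis by (simp add: omega_def)
  qed
  ultimately show ?thesis using edges by (simp add: agree_near_def)
qed

lemma agree_near_disk: "agree_near (fst (disk G c r)) G (ball G c r)"
proof -
  have "incident_edges (fst (disk G c r)) (ball G c r) = incident_edges G (ball G c r)"
    by (auto simp: disk_eq incident_edges_def)
  then show ?thesis by (simp add: agree_near_def disk_eq)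
qed

lemma disk_eqI:
  assumes "ball G c r = ball H c r" and "ball G c (Suc r) = ball H c (Suc r)"
    and "agree_near G H (ball G c r)"
  shows "disk G c r = disk H c r"
proof -
  let ?B = "ball G c r" and ?E = "incident_edges G (ball G c r)"
  have "vlab G |` ?B = vlab H |` ?B" and "elab G |` ?E = elab H |` ?E"
    using assms(3) by (auto simp: agree_near_def restrict_map_def)
  then show ?thesis using assms unfolding disk_eq agree_near_def by simp
qed

theorem proposition3p1:
  fixes G :: "('v,'s,'d,'p::finite) graph" and v :: 'v and r :: nat
  assumes "\<not> countable (UNIV :: 'v set)"
    and "is_graph G"
    and "v \<in> verts G"
  shows "omega_r r (disk G v r) = disk (omega G) v r"
proof -
  define H where "H = fst (disk G v r)"
  have disk: "disk G v r = (H, v)" by (simp add: H_def disk_eq)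
  have H: "is_graph H" unfolding H_def using assms(2) by (rule is_graph_disk)
  have balls: "ball (omega H) v k = ball G v k" if "k \<le> Suc r" for k
    using ball_omega[OF H] ball_disk[OF assms(2,3) that] by (simp add: H_def)
  have "ball G v r \<subseteq> verts H" by (simp add: H_def disk_eq ball_mono)
  moreover have "ball G v r \<subseteq> verts G" by (auto simp: ball_def)
  ultimately have "agree_near (omega H) (omega G) (ball G v r)"
    using agree_near_omega[OF H assms(2)] agree_near_disk[of G v r] by (simp add: H_def)
  then have "disk (omega H) v r = disk (omega G) v r"
    using balls ball_omega[OF assms(2)] by (intro disk_eqI) simp_all
  then show ?thesis by (simp add: omega_r_def disk)
qed

end
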